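(* Let $|p|<1$, $|P|<1$, and let $(a_k),(b_k),(c_k),(d_k),(A_k),(B_k),(C_k),(D_k)$ ($k\ge0$) be sequences of nonzero complex numbers such that all expressions below are well defined. For $k\ge 0$ put $$\lambda_k=\frac{\theta(a_k,a_k/(b_kc_k),a_k/(b_kd_k),a_k/(c_kd_k);p)}{\theta(a_k/(b_kc_kd_k),a_k/d_k,a_k/c_k,a_k/b_k;p)}\prod_{j=0}^{k-1}\frac{\theta(b_j,c_j,d_j,a_j^2/(b_jc_jd_j);p)}{\theta(a_j/b_j,a_j/c_j,a_j/d_j,b_jc_jd_j/a_j;p)},$$ $$\Lambda_k=\frac{\theta(A_k,A_k/(B_kC_k),A_k/(B_kD_k),A_k/(C_kD_k);P)}{\theta(A_k/(B_kC_kD_k),A_k/D_k,A_k/C_k,A_k/B_k;P)}\prod_{j=0}^{k-1}\frac{\theta(B_j,C_j,D_j,A_j^2/(B_jC_jD_j);P)}{\theta(A_j/B_j,A_j/C_j,A_j/D_j,B_jC_jD_j/A_j;P)}.$$ Then for every $n=0,1,2,\ldots$, $$\sum_{k=0}^n\lambda_k\Bigg\{1-\prod_{j=0}^{n-k}\frac{\theta(B_j,C_j,D_j,A_j^2/(B_jC_jD_j);P)}{\theta(A_j/B_j,A_j/C_j,A_j/D_j,B_jC_jD_j/A_j;P)}\Bigg\} =\sum_{k=0}^n\Lambda_k\Bigg\{1-\prod_{j=0}^{n-k}\frac{\theta(b_j,c_j,d_j,a_j^2/(b_jc_jd_j);p)}{\theta(a_j/b_j,a_j/c_j,a_j/d_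j,b_jc_jd_j/a_j;p)}\Bigg\}.$$
   Context: For $|p|<1$ and $x\neq 0$, $\theta(x;p)=(x;p)_\infty(p/x;p)_\infty$ where $(x;p)_\infty=\prod_{k\ge 0}(1-xp^k)$, and $\theta(x_1,\dots,x_m;p)=\prod_{i=1}^m\theta(x_i;p)$. Empty products equal $1$. *)

theory Defs
  imports "HOL-Analysis.Analysis"
begin

definition qpoch_inf :: "complex \<Rightarrow> complex \<Rightarrow> complex" where
  "qpoch_inf x p = (\<Prod>k. 1 - x * p ^ k)"

definition theta :: "complex \<Rightarrow> complex \<Rightarrow> complex" where
  "theta x p = qpoch_inf x p * qpoch_inf (p / x) p"

definition theta_list :: "complex list \<Rightarrow> complex \<Rightarrow> complex" where
  "theta_list xs p = prod_list (map (\<lambda>x. theta x p) xs)"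

definition wfac :: "(nat \<Rightarrow> complex) \<Rightarrow> (nat \<Rightarrow> complex) \<Rightarrow> (nat \<Rightarrow> complex) \<Rightarrow> (nat \<Rightarrow> complex)
    \<Rightarrow> complex \<Rightarrow> nat \<Rightarrow> complex" where
  "wfac a b c d p j =
     theta_list [b j, c j, d j, a j ^ 2 / (b j * c j * d j)] p /
     theta_list [a j / b j, a j / c j, a j / d j, b j * c j * d j / a j] p"

definition lam :: "(nat \<Rightarrow> complex) \<Rightarrow> (nat \<Rightarrow> complex) \<Rightarrow> (nat \<Rightarrow> complex) \<Rightarrow> (nat \<Rightarrow> complex)
    \<Rightarrow> complex \<Rightarrow> nat \<Rightarrow> complex" where
  "lam a b c d p k =
     theta_list [a k, a k / (b k * c k), a k / (b k * d k), a k / (c k * d k)] p /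
     theta_list [a k / (b k * c k * d k), a k / d k, a k / c k, a k / b k] p *
     (\<Prod>j<k. wfac a b c d p j)"

end

theory Submission
  imports Defs "HOL-Complex_Analysis.Complex_Analysis"
begin

text \<open>
  By Weierstrass' addition formula for theta functions, the first quotient in the
  definition of \<open>\<lambda>\<^sub>k\<close> equals \<open>1 - w\<^sub>k\<close>, where \<open>w\<^sub>k = wfac a b c d p k\<close>.
  Hence \<open>\<lambda>\<^sub>k = R k - R (k + 1)\<close> with \<open>R k = w\<^sub>0 \<cdots> w\<^sub>k\<^sub>-\<^sub>1\<close>, and likewise
  \<open>\<Lambda>\<^sub>k = S k - S (k + 1)\<close>. Expanded in terms of the convolutions
  \<open>\<Sum>\<^sub>k R k * S (m - k)\<close>, which are symmetric in \<open>R\<close> and \<open>S\<close>, both sides of the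
  theorem become the same expression.

  The addition formula is proved via Liouville's theorem. The zeros of \<open>\<theta>(x;p)\<close> are
  exactly the integer powers of \<open>p\<close>, and they are simple. For generic \<open>u\<close> the zeros of
  \<open>\<theta>(xu;p) \<theta>(x/u;p)\<close> are simple as well and the defect of the formula vanishes there,
  so the defect divided by \<open>\<theta>(xu;p) \<theta>(x/u;p)\<close> is holomorphic for \<open>x \<noteq> 0\<close>. Both
  pick up the factor \<open>x\<^sup>-\<^sup>2\<close> under \<open>x \<mapsto> px\<close>, so the quotient is invariant, hence
  bounded, thus constant, and it vanishes at \<open>x = v\<close>. The countably many remaining
  values of \<open>u\<close> are handled by continuity in \<open>u\<close>, and the case \<open>p = 0\<close> is
  elementary.
\<close>

lemma mult_powi_invariant:
  fixes p z :: "'a::field"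
  assumes "p \<noteq> 0" "z \<noteq> 0" "\<And>w. w \<noteq> 0 \<Longrightarrow> P (p * w) \<longleftrightarrow> P w"
  shows "P (p powi m * z) \<longleftrightarrow> P z"
proof (induction m rule: int_induct[where k = 0])
  case (step1 i)
  have "p powi (i + 1) * z = p * (p powi i * z)"
    using assms(1) by (simp add: power_int_add mult_ac)
  moreover have "P (p * (p powi i * z)) \<longleftrightarrow> P (p powi i * z)"
    by (rule assms(3)) (use assms(1,2) in simp)
  ultimately show ?case
    using step1 by (simp only:)
next
  case (step2 i)
  have "p powi i * z = p * (p powi (i - 1) * z)"
    using assms(1) by (simp add: power_int_diff)
  moreover have "P (p * (p powi (i - 1) * z)) \<longleftrightarrow> P (p powi (i - 1) * z)"
    by (rule assms(3)) (use assms(1,2) in simp)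
  ultimately show ?case
    using step2 by (simp only:)
qed simp

lemma has_field_derivative_nonzero_imp_eventually_ne:
  assumes "(f has_field_derivative f') (at x)" "f' \<noteq> 0"
  shows "\<forall>\<^sub>F z in at x. f z \<noteq> f x"
proof -
  have "((\<lambda>z. (f z - f x) / (z - x)) \<longlongrightarrow> f') (at x)"
    using assms(1) by (simp add: has_field_derivative_iff)
  then have "\<forall>\<^sub>F z in at x. (f z - f x) / (z - x) \<noteq> 0"
    using assms(2) by (rule tendsto_imp_eventually_ne)
  then show ?thesis
    by (rule eventually_mono) auto
qed

lemma holomorphic_quotient_near_simple_zero:
  fixes F T :: "complex \<Rightarrow> complex"
  assumes S: "open S" "x \<in> S" and F: "F holomorphic_on S" and T: "T holomorphic_on S"
    and zero: "T x = 0" "F x = 0" "deriv T x \<noteq> 0"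
  obtains r where "r > 0"
    "(\<lambda>z. if T z = 0 then deriv F z / deriv T z else F z / T z) holomorphic_on ball x r"
proof -
  have dF: "(F has_field_derivative deriv F x) (at x)"
    and dT: "(T has_field_derivative deriv T x) (at x)"
    using holomorphic_derivI[OF F S] holomorphic_derivI[OF T S] .
  have lim: "((\<lambda>z. F z / T z) \<longlongrightarrow> deriv F x / deriv T x) (at x)"
    using zero by (intro lhopital_complex_simple[OF dF dT]) auto
  have "\<forall>\<^sub>F z in at x. T z \<noteq> T x"
    by (rule has_field_derivative_nonzero_imp_eventually_ne[OF dT zero(3)])
  then have "\<forall>\<^sub>F z in at x. T z \<noteq> 0 \<and> z \<in> S"
    using eventually_conj[OF _ eventually_at_in_open'[OF S]] zero(1) by simp
  then obtain r where r: "r > 0" "\<And>z. z \<noteq> x \<Longrightarrow> dist z x < r \<Longrightarrow> T z \<noteq> 0 \<and> z \<in> S"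
    unfolding eventually_at by auto
  have sub: "ball x r - {x} \<subseteq> S"
  proof
    fix z
    assume "z \<in> ball x r - {x}"
    then show "z \<in> S"
      using r(2)[of z] by (auto simp: dist_commute)
  qed
  have "(\<lambda>z. F z / T z) holomorphic_on ball x r - {x}"
    using holomorphic_on_subset[OF F sub] holomorphic_on_subset[OF T sub] r(2)
    by (intro holomorphic_intros) (auto simp: dist_commute)
  from removable_singularity[OF this _ lim]
  have "(\<lambda>z. if T z = 0 then deriv F z / deriv T z else F z / T z) holomorphic_on ball x r"
    by (rule holomorphic_transform) (use r zero(1) in \<open>auto simp: dist_commute\<close>)
  with r(1) show ?thesis
    using that by blast
qed

lemma holomorphic_on_quotient_simple_zeros:
  fixes F T :: "complex \<Rightarrow> complex"
  assumes S: "open S" and F: "F holomorphic_on S" and T: "T holomorphic_on S"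
    and zeros: "\<And>x. x \<in> S \<Longrightarrow> T x = 0 \<Longrightarrow> F x = 0 \<and> deriv T x \<noteq> 0"
  shows "(\<lambda>x. if T x = 0 then deriv F x / deriv T x else F x / T x) holomorphic_on S"
    (is "?H holomorphic_on S")
  unfolding holomorphic_on_open[OF S]
proof
  fix x
  assume x: "x \<in> S"
  show "\<exists>H'. (?H has_field_derivative H') (at x)"
  proof (cases "T x = 0")
    case False
    define U where "U = T -` (- {0}) \<inter> S"
    have U: "open U"
      using continuous_on_open_vimage[OF S, of T] holomorphic_on_imp_continuous_on[OF T]
      unfolding U_def by auto
    have H: "?H holomorphic_on U"
      by (rule holomorphic_transform[of "\<lambda>x. F x / T x"])
         (use holomorphic_on_subset[OF F] holomorphic_on_subset[OF T] in
           \<open>auto simp: U_def intro!: holomorphic_intros\<close>)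
    have "x \<in> U"
      using x False by (simp add: U_def)
    from holomorphic_derivI[OF H U this] show ?thesis ..
  next
    case True
    then obtain r where "r > 0" "?H holomorphic_on ball x r"
      using holomorphic_quotient_near_simple_zero[OF S x F T] zeros[OF x] by blast
    then show ?thesis
      using holomorphic_derivI[OF _ open_ball] centre_in_ball by blast
  qed
qed

lemma exists_powi_bracket:
  fixes q r :: real
  assumes "0 < q" "q < 1" "0 < r"
  obtains n :: int where "q powi (n + 1) < r" "r \<le> q powi n"
proof -
  define t where "t = ln r / ln q"
  define n where "n = \<lfloor>t\<rfloor>"
  have lq: "ln q < 0"
    using assms by simp
  have t: "real_of_int n \<le> t" "t < real_of_int n + 1" "t * ln q = ln r"
    using lq by (simp_all add: n_def t_def)
  have "t * ln q \<le> real_of_int n * ln q"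
    using t(1) lq by (simp add: mult_right_mono_neg)
  moreover have "(real_of_int n + 1) * ln q < t * ln q"
    using t(2) lq by (simp add: mult_strict_right_mono_neg)
  ultimately have "ln r \<le> real_of_int n * ln q" "real_of_int (n + 1) * ln q < ln r"
    using t(3) by auto
  moreover have "q powi m = exp (real_of_int m * ln q)" for m
    using powr_real_of_int'[of q m] assms by (simp add: powr_def)
  ultimately show ?thesis
    using that assms by (metis exp_le_cancel_iff exp_less_cancel_iff exp_ln)
qed

lemma dilation_invariant_bounded:
  fixes H :: "complex \<Rightarrow> 'a::real_normed_vector"
  assumes p: "norm p < 1" "p \<noteq> 0" and H: "continuous_on (- {0}) H"
    and inv: "\<And>z. z \<noteq> 0 \<Longrightarrow> H (p * z) = H z"
  obtains M where "\<And>z. z \<noteq> 0 \<Longrightarrow> norm (H z) \<le> M"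
proof -
  define K where "K = cball (0::complex) 1 - ball 0 (norm p)"
  have "compact K" "K \<subseteq> - {0}"
    using p by (auto simp: K_def intro!: compact_diff)
  then have "compact (H ` K)"
    using compact_continuous_image continuous_on_subset[OF H] by blast
  then obtain M where M: "\<And>z. z \<in> K \<Longrightarrow> norm (H z) \<le> M"
    using compact_imp_bounded bounded_iff by (metis imageI)
  have "norm (H z) \<le> M" if z: "z \<noteq> 0" for z
  proof -
    obtain n :: int where n: "norm p powi (n + 1) < norm z" "norm z \<le> norm p powi n"
      using exists_powi_bracket[of "norm p" "norm z"] p z by auto
    have pn: "norm p powi n > 0"
      using p by simp
    have "norm (p powi (- n) * z) = norm z / norm p powi n"
      by (simp add: norm_mult norm_power_int power_int_minus divide_inverse mult.commute norm_inverse)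
    moreover have "norm p powi (n + 1) = norm p * norm p powi n"
      using p by (simp add: power_int_add)
    ultimately have "p powi (- n) * z \<in> K"
      using n pn by (auto simp: K_def field_simps)
    moreover have "H (p powi (- n) * z) = H z"
      using mult_powi_invariant[of p z "\<lambda>w. H w = H z" "- n"] inv p z by auto
    ultimately show ?thesis
      using M by metis
  qed
  then show ?thesis
    using that by blast
qed

lemma dilation_invariant_holomorphic_constant:
  assumes p: "norm p < 1" "p \<noteq> 0" and H: "H holomorphic_on - {0}"
    and inv: "\<And>z. z \<noteq> 0 \<Longrightarrow> H (p * z) = H z"
  obtains c where "\<And>z. z \<noteq> 0 \<Longrightarrow> H z = c"
proof -
  obtain M where M: "\<And>z. z \<noteq> 0 \<Longrightarrow> norm (H z) \<le> M"
    using dilation_invariant_bounded[OF p holomorphic_on_imp_continuous_on[OF H] inv] by blast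
  have "H \<in> O[at 0](\<lambda>_. 1)"
    by (intro bigoI[of _ M] eventually_at_filter[THEN iffD2] always_eventually) (auto intro!: M)
  then obtain G where G: "G holomorphic_on UNIV" "\<And>z. z \<noteq> 0 \<Longrightarrow> G z = H z"
    using holomorphic_on_extend[of H UNIV 0] H by (auto simp: Compl_eq_Diff_UNIV)
  have "G z \<in> insert (G 0) (cball 0 M)" for z
    using G(2)[of z] M[of z] by (cases "z = 0") auto
  then have "bounded (range G)"
    by (meson bounded_cball bounded_insert bounded_subset image_subsetI)
  then obtain c where "\<And>z. G z = c"
    using Liouville_theorem[OF G(1)] by (auto simp: constant_on_def)
  then show ?thesis
    using that G(2) by metis
qed

lemma continuous_on_eq_0_off_countable:
  fixes f :: "'a::euclidean_space \<Rightarrow> 'b::real_normed_vector"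
  assumes "open S" "continuous_on S f" "countable E" "\<And>z. z \<in> S - E \<Longrightarrow> f z = 0" "z \<in> S"
  shows "f z = 0"
proof (rule ccontr)
  assume "f z \<noteq> 0"
  moreover have "open (f -` (- {0}) \<inter> S)"
    using continuous_on_open_vimage[OF assms(1), of f] assms(2) by auto
  ultimately obtain e where "e > 0" "ball z e \<subseteq> f -` (- {0}) \<inter> S"
    using assms(5) open_contains_ball by blast
  moreover obtain w where "w \<in> ball z e - E"
    using ball_minus_countable_nonempty[OF assms(3) \<open>e > 0\<close>] by blast
  ultimately show False
    using assms(4) by (force simp: subset_iff)
qed

lemma finite_square_roots: "finite {w::complex. w * w = c}"
proof (rule finite_subset)
  show "{w::complex. w * w = c} \<subseteq> {csqrt c, - csqrt c}"
    using power2_eq_iff[of _ "csqrt c"] by (auto simp: power2_eq_square[symmetric])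
qed auto

section \<open>A symmetric convolution identity\<close>

lemma sum_convolution_commute:
  fixes R S :: "nat \<Rightarrow> 'a::comm_semiring_1"
  shows "(\<Sum>k\<le>m. R k * S (m - k)) = (\<Sum>k\<le>m. S k * R (m - k))"
proof -
  have "(\<Sum>k\<le>m. S k * R (m - k)) = (\<Sum>k<Suc m. S k * R (m - k))"
    by (simp add: lessThan_Suc_atMost)
  also have "\<dots> = (\<Sum>i<Suc m. S (Suc m - Suc i) * R (m - (Suc m - Suc i)))"
    by (rule sum.nat_diff_reindex[symmetric])
  also have "\<dots> = (\<Sum>i\<le>m. R i * S (m - i))"
    by (simp add: lessThan_Suc_atMost mult.commute)
  finally show ?thesis ..
qed

lemma telescoping_convolution_symmetric:
  fixes R S :: "nat \<Rightarrow> 'a::comm_ring_1"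
  assumes "R 0 = 1" "S 0 = 1"
  shows "(\<Sum>k\<le>n. (R k - R (Suc k)) * (1 - S (Suc n - k)))
       = (\<Sum>k\<le>n. (S k - S (Suc k)) * (1 - R (Suc n - k)))"
proof -
  define C where "C = (\<lambda>m. \<Sum>k\<le>m. R k * S (m - k))"
  have C': "C m = (\<Sum>k\<le>m. S k * R (m - k))" for m
    unfolding C_def by (rule sum_convolution_commute)
  have expand: "(\<Sum>k\<le>n. (X k - X (Suc k)) * (1 - Y (Suc n - k)))
      = X 0 - X (Suc n) - (\<Sum>k\<le>n. X k * Y (Suc n - k)) + (\<Sum>k\<le>n. X (Suc k) * Y (Suc n - k))"
    for X Y :: "nat \<Rightarrow> 'a"
  proof -
    have "(\<Sum>k\<le>n. X k - X (Suc k)) = X 0 - X (Suc n)"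
      by (rule sum_telescope)
    then show ?thesis
      by (simp add: algebra_simps sum.distrib sum_subtractf)
  qed
  have RS: "(\<Sum>k\<le>n. R k * S (Suc n - k)) = C (Suc n) - R (Suc n) * S 0"
    unfolding C_def by simp
  have SR: "(\<Sum>k\<le>n. S k * R (Suc n - k)) = C (Suc n) - S (Suc n) * R 0"
    unfolding C' by simp
  have RS_shift: "(\<Sum>k\<le>n. R (Suc k) * S (Suc n - k))
      = C (Suc (Suc n)) - R 0 * S (Suc (Suc n)) - R (Suc (Suc n)) * S 0"
    unfolding C_def by (subst sum.atMost_Suc_shift) simp
  have SR_shift: "(\<Sum>k\<le>n. S (Suc k) * R (Suc n - k))
      = C (Suc (Suc n)) - S 0 * R (Suc (Suc n)) - S (Suc (Suc n)) * R 0"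
    unfolding C' by (subst sum.atMost_Suc_shift) simp
  show ?thesis
    unfolding expand[of R S] expand[of S R] RS SR RS_shift SR_shift
    using assms by (simp add: algebra_simps)
qed

lemma sum_diff_partial_products_symmetric:
  fixes r s :: "nat \<Rightarrow> 'a::comm_ring_1"
  shows "(\<Sum>k=0..n. ((\<Prod>j<k. r j) - (\<Prod>j<Suc k. r j)) * (1 - (\<Prod>j=0..n-k. s j)))
       = (\<Sum>k=0..n. ((\<Prod>j<k. s j) - (\<Prod>j<Suc k. s j)) * (1 - (\<Prod>j=0..n-k. r j)))"
proof -
  have "(\<Prod>j=0..n-k. f j) = (\<Prod>j<Suc n - k. f j)" if "k \<le> n" for f :: "nat \<Rightarrow> 'a" and k
    using that by (simp add: atLeast0AtMost lessThan_Suc_atMost Suc_diff_le)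
  then show ?thesis
    using telescoping_convolution_symmetric[of "\<lambda>k. \<Prod>j<k. r j" "\<lambda>k. \<Prod>j<k. s j" n]
    by (simp add: atLeast0AtMost)
qed

section \<open>The infinite \<open>q\<close>-Pochhammer symbol\<close>

lemma qpoch_inf_convergent_prod:
  assumes "norm (p::complex) < 1"
  shows "convergent_prod (\<lambda>k. 1 - x * p ^ k)"
proof (intro abs_convergent_prod_imp_convergent_prod summable_imp_abs_convergent_prod)
  have "summable (\<lambda>k. norm x * norm p ^ k)"
    using assms by (intro summable_mult summable_geometric) auto
  then show "summable (\<lambda>k. norm (1 - x * p ^ k - 1))"
    by (simp add: norm_mult norm_power)
qed

lemma qpoch_inf_LIMSEQ:
  assumes "norm (p::complex) < 1"
  shows "(\<lambda>n. \<Prod>k<n. 1 - x * p ^ k) \<longlonglongrightarrow> qpoch_inf x p"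
proof -
  have "(\<lambda>n. \<Prod>k<Suc n. 1 - x * p ^ k) \<longlonglongrightarrow> qpoch_inf x p"
    unfolding qpoch_inf_def lessThan_Suc_atMost
    by (rule convergent_prod_LIMSEQ[OF qpoch_inf_convergent_prod[OF assms]])
  then show ?thesis
    by (rule filterlim_sequentially_Suc[THEN iffD1])
qed

lemma qpoch_inf_unfold:
  assumes "norm (p::complex) < 1"
  shows "qpoch_inf x p = (1 - x) * qpoch_inf (p * x) p"
proof -
  have "(\<lambda>n. \<Prod>k<Suc n. 1 - x * p ^ k) = (\<lambda>n. (1 - x) * (\<Prod>k<n. 1 - (p * x) * p ^ k))"
    by (rule ext, subst prod.lessThan_Suc_shift) (simp add: algebra_simps)
  moreover have "(\<lambda>n. \<Prod>k<Suc n. 1 - x * p ^ k) \<longlonglongrightarrow> qpoch_inf x p"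
    using qpoch_inf_LIMSEQ[OF assms] by (rule LIMSEQ_Suc)
  moreover have
    "(\<lambda>n. (1 - x) * (\<Prod>k<n. 1 - (p * x) * p ^ k)) \<longlonglongrightarrow> (1 - x) * qpoch_inf (p * x) p"
    by (intro tendsto_mult tendsto_const qpoch_inf_LIMSEQ[OF assms])
  ultimately show ?thesis
    using LIMSEQ_unique by metis
qed

lemma qpoch_inf_zero_base: "qpoch_inf x 0 = 1 - x"
  using qpoch_inf_unfold[of 0 x] by (simp add: qpoch_inf_def)

lemma qpoch_inf_nonzero:
  assumes "norm (p::complex) < 1" "\<And>k. x * p ^ k \<noteq> 1"
  shows "qpoch_inf x p \<noteq> 0"
  unfolding qpoch_inf_def
  by (rule prodinf_nonzero[OF qpoch_inf_convergent_prod[OF assms(1)]])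
     (use assms(2) in \<open>auto simp: right_minus_eq\<close>)

lemma qpoch_inf_holomorphic:
  assumes "norm (p::complex) < 1"
  shows "(\<lambda>x. qpoch_inf x p) holomorphic_on A"
proof (rule holomorphic_on_subset)
  define P where "P = (\<lambda>N x. \<Prod>k<N. 1 - x * p ^ k)"
  show "(\<lambda>x. qpoch_inf x p) holomorphic_on UNIV"
  proof (rule holomorphic_uniform_sequence)
    fix z :: complex
    define R where "R = norm z + 1"
    have "uniformly_convergent_on (cball 0 R) P"
      unfolding P_def
    proof (rule uniformly_convergent_on_prod')
      show "uniformly_convergent_on (cball 0 R) (\<lambda>N x. \<Sum>n<N. norm (1 - x * p ^ n - 1))"
      proof (rule Weierstrass_m_test'_ev)
        show "\<forall>\<^sub>F n in sequentially.
                \<forall>x\<in>cball 0 R. norm (norm (1 - x * p ^ n - 1)) \<le> R * norm p ^ n"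
          by (intro always_eventually allI ballI)
             (auto simp: norm_mult norm_power intro!: mult_right_mono)
        show "summable (\<lambda>n. R * norm p ^ n)"
          using assms by (intro summable_mult summable_geometric) auto
      qed
    qed (auto intro!: continuous_intros)
    then obtain g where g: "uniform_limit (cball 0 R) P g sequentially"
      by (auto simp: uniformly_convergent_on_def)
    have "uniform_limit (cball 0 R) P (\<lambda>x. qpoch_inf x p) sequentially"
    proof (rule uniform_limit_cong[THEN iffD1, OF _ _ g])
      fix x :: complex
      assume "x \<in> cball 0 R"
      with g have "(\<lambda>n. P n x) \<longlonglongrightarrow> g x"
        by (metis tendsto_uniform_limitI)
      moreover have "(\<lambda>n. P n x) \<longlonglongrightarrow> qpoch_inf x p"
        unfolding P_def by (rule qpoch_inf_LIMSEQ[OF assms])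
      ultimately show "g x = qpoch_inf x p"
        using tendsto_unique by force
    qed auto
    then have "uniform_limit (cball z 1) P (\<lambda>x. qpoch_inf x p) sequentially"
      by (rule uniform_limit_on_subset) (simp add: cball_subset_cball_iff R_def)
    then show "\<exists>d>0. cball z d \<subseteq> UNIV \<and>
                 uniform_limit (cball z d) P (\<lambda>x. qpoch_inf x p) sequentially"
      by (intro exI[of _ 1]) auto
  qed (auto intro!: holomorphic_intros simp: P_def)
qed auto

section \<open>Zeros and quasi-periodicity of \<open>\<theta>\<close>\<close>

lemma theta_unfold:
  assumes "norm (p::complex) < 1"
  shows "theta z p = (1 - z) * qpoch_inf (p * z) p * qpoch_inf (p / z) p"
  unfolding theta_def by (subst qpoch_inf_unfold[OF assms]) simp

lemma theta_one:
  assumes "norm (p::complex) < 1"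
  shows "theta 1 p = 0"
  using theta_unfold[OF assms, of 1] by simp

lemma theta_zero_base: "theta z 0 = 1 - z"
  by (simp add: theta_def qpoch_inf_zero_base)

lemma theta_inverse:
  assumes "norm (p::complex) < 1" "z \<noteq> 0"
  shows "theta (1 / z) p = - theta z p / z"
proof -
  have "theta (1 / z) p = (1 - 1 / z) * qpoch_inf (p / z) p * qpoch_inf (p * z) p"
    by (simp add: theta_def qpoch_inf_unfold[OF assms(1), of "1 / z"])
  then show ?thesis
    using assms(2) by (simp add: theta_unfold[OF assms(1), of z] field_simps)
qed

lemma theta_quasi_periodic:
  assumes "norm (p::complex) < 1" "p \<noteq> 0" "z \<noteq> 0"
  shows "theta (p * z) p = - theta z p / z"
proof -
  have "theta (p * z) p = qpoch_inf (p * z) p * ((1 - 1 / z) * qpoch_inf (p / z) p)"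
    using assms by (simp add: theta_def qpoch_inf_unfold[OF assms(1), of "1 / z"])
  then show ?thesis
    using assms(3) by (simp add: theta_unfold[OF assms(1), of z] field_simps)
qed

lemma theta_eq_0_iff:
  assumes "norm (p::complex) < 1" "p \<noteq> 0" "z \<noteq> 0"
  shows "theta z p = 0 \<longleftrightarrow> (\<exists>m::int. z = p powi m)"
proof
  assume "theta z p = 0"
  then have "qpoch_inf z p = 0 \<or> qpoch_inf (p / z) p = 0"
    by (simp add: theta_def)
  then consider k where "z * p ^ k = 1" | k where "p / z * p ^ k = 1"
    using qpoch_inf_nonzero[OF assms(1)] by blast
  then show "\<exists>m::int. z = p powi m"
  proof cases
    case (1 k)
    then have "z = p powi (- int k)"
      using assms(2) by (simp add: power_int_minus field_simps)
    then show ?thesis ..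
  next
    case (2 k)
    then have "z = p ^ Suc k"
      using assms(2,3) by (auto simp: field_simps)
    then have "z = p powi int (Suc k)"
      by (simp only: power_int_of_nat)
    then show ?thesis ..
  qed
next
  assume "\<exists>m::int. z = p powi m"
  then obtain m where "z = p powi m * 1"
    by auto
  moreover have "theta (p powi m * 1) p = 0 \<longleftrightarrow> theta 1 p = 0"
    by (rule mult_powi_invariant) (use assms theta_quasi_periodic in auto)
  ultimately show "theta z p = 0"
    using theta_one[OF assms(1)] by simp
qed

lemma theta_holomorphic:
  assumes "norm (p::complex) < 1"
  shows "(\<lambda>z. theta z p) holomorphic_on - {0}"
proof -
  have "(\<lambda>z. p / z) holomorphic_on - {0}"
    by (auto intro!: holomorphic_intros)
  from holomorphic_on_compose[OF this qpoch_inf_holomorphic[OF assms]]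
  have "(\<lambda>z. qpoch_inf (p / z) p) holomorphic_on - {0}"
    by (simp add: o_def)
  then show ?thesis
    unfolding theta_def by (intro holomorphic_intros qpoch_inf_holomorphic[OF assms])
qed

lemma theta_compose_holomorphic:
  assumes "norm (p::complex) < 1" "f holomorphic_on A" "\<And>z. z \<in> A \<Longrightarrow> f z \<noteq> 0"
  shows "(\<lambda>z. theta (f z) p) holomorphic_on A"
proof -
  have "f ` A \<subseteq> - {0}"
    using assms(3) by auto
  then show ?thesis
    using holomorphic_on_compose_gen[OF assms(2) theta_holomorphic[OF assms(1)]] by (simp add: o_def)
qed

lemma theta_has_field_derivative:
  assumes "norm (p::complex) < 1" "z \<noteq> 0"
  shows "((\<lambda>z. theta z p) has_field_derivative deriv (\<lambda>z. theta z p) z) (at z)"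
  by (rule holomorphic_derivI[OF theta_holomorphic[OF assms(1)]]) (use assms(2) in auto)

lemma deriv_theta_quasi_periodic:
  assumes "norm (p::complex) < 1" "p \<noteq> 0" "z \<noteq> 0" "theta z p = 0"
  shows "p * deriv (\<lambda>z. theta z p) (p * z) = - deriv (\<lambda>z. theta z p) z / z"
proof -
  define D where "D = deriv (\<lambda>z. theta z p)"
  have "p * z \<noteq> 0"
    using assms by simp
  from DERIV_chain2[where g = "\<lambda>w. p * w" and x = z, OF theta_has_field_derivative[OF assms(1) this]]
  have "((\<lambda>w. theta (p * w) p) has_field_derivative D (p * z) * p) (at z)"
    by (auto simp: D_def intro!: derivative_eq_intros)
  then have "((\<lambda>w. - theta w p / w) has_field_derivative D (p * z) * p) (at z)"
    by (rule has_field_derivative_transform_within_open[of _ _ _ "- {0}"])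
       (use assms in \<open>auto simp: theta_quasi_periodic\<close>)
  moreover have "((\<lambda>w. - theta w p / w) has_field_derivative - D z / z) (at z)"
    using theta_has_field_derivative[OF assms(1,3)] assms(3,4)
    by (auto simp: D_def field_simps power2_eq_square intro!: derivative_eq_intros)
  ultimately show ?thesis
    unfolding D_def by (metis DERIV_unique mult.commute)
qed

lemma deriv_theta_one:
  assumes "norm (p::complex) < 1"
  shows "deriv (\<lambda>z. theta z p) 1 = - (qpoch_inf p p ^ 2)"
proof -
  define R where "R = (\<lambda>z. qpoch_inf (p * z) p * qpoch_inf (p / z) p)"
  have "(\<lambda>z. p * z) holomorphic_on - {0}" "(\<lambda>z. p / z) holomorphic_on - {0}"
    by (auto intro!: holomorphic_intros)
  from this[THEN holomorphic_on_compose, OF qpoch_inf_holomorphic[OF assms]]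
  have "R holomorphic_on - {0}"
    unfolding R_def by (auto simp: o_def intro!: holomorphic_intros)
  then have "(R has_field_derivative deriv R 1) (at 1)"
    by (rule holomorphic_derivI) auto
  then have "((\<lambda>z. (1 - z) * R z) has_field_derivative - R 1) (at 1)"
    by (auto intro!: derivative_eq_intros)
  moreover have "(\<lambda>z. theta z p) = (\<lambda>z. (1 - z) * R z)"
    by (simp add: R_def theta_unfold[OF assms] mult.assoc)
  ultimately show ?thesis
    by (simp add: DERIV_imp_deriv R_def power2_eq_square)
qed

lemma deriv_theta_one_nonzero:
  assumes "norm (p::complex) < 1"
  shows "deriv (\<lambda>z. theta z p) 1 \<noteq> 0"
proof -
  have "qpoch_inf p p \<noteq> 0"
  proof (rule qpoch_inf_nonzero[OF assms])
    fix k
    have "norm (p * p ^ k) < 1"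
      using assms by (simp add: norm_mult norm_power flip: power_Suc add: power_less_one_iff)
    then show "p * p ^ k \<noteq> 1"
      by auto
  qed
  then show ?thesis
    by (simp add: deriv_theta_one[OF assms])
qed

lemma deriv_theta_nonzero:
  assumes "norm (p::complex) < 1" "p \<noteq> 0" "w \<noteq> 0" "theta w p = 0"
  shows "deriv (\<lambda>z. theta z p) w \<noteq> 0"
proof -
  let ?P = "\<lambda>z. theta z p = 0 \<and> deriv (\<lambda>z. theta z p) z \<noteq> 0"
  obtain m where m: "w = p powi m * 1"
    using assms theta_eq_0_iff by auto
  have "?P (p powi m * 1) \<longleftrightarrow> ?P 1"
  proof (rule mult_powi_invariant)
    fix z :: complex
    assume z: "z \<noteq> 0"
    show "?P (p * z) \<longleftrightarrow> ?P z"
    proof (cases "theta z p = 0")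
      case True
      then have "p * deriv (\<lambda>z. theta z p) (p * z) = - deriv (\<lambda>z. theta z p) z / z"
        by (rule deriv_theta_quasi_periodic[OF assms(1,2) z])
      then show ?thesis
        using True theta_quasi_periodic[OF assms(1,2) z] assms(2) z by auto
    qed (simp add: theta_quasi_periodic[OF assms(1,2) z] z)
  qed (use assms in auto)
  then show ?thesis
    using m theta_one[OF assms(1)] deriv_theta_one_nonzero[OF assms(1)] by simp
qed

section \<open>Weierstrass' addition formula\<close>

definition theta_pair :: "complex \<Rightarrow> complex \<Rightarrow> complex \<Rightarrow> complex" where
  "theta_pair p s x = theta (x * s) p * theta (x / s) p"

definition weierstrass_defect ::
    "complex \<Rightarrow> complex \<Rightarrow> complex \<Rightarrow> complex \<Rightarrow> complex \<Rightarrow> complex" where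
  "weierstrass_defect p y u v x =
     theta_pair p y x * theta_pair p v u - theta_pair p v x * theta_pair p y u
     - u / y * theta_pair p v y * theta_pair p u x"

lemma theta_pair_quasi_periodic:
  assumes "norm p < 1" "p \<noteq> 0" "x \<noteq> 0" "s \<noteq> 0"
  shows "theta_pair p s (p * x) = theta_pair p s x / x ^ 2"
proof -
  have mult: "theta (p * x * s) p = - theta (x * s) p / (x * s)"
    using theta_quasi_periodic[OF assms(1,2), of "x * s"] assms by (simp add: mult.assoc)
  have div: "theta (p * x / s) p = - theta (x / s) p / (x / s)"
    using theta_quasi_periodic[OF assms(1,2), of "x / s"] assms by simp
  show ?thesis
    unfolding theta_pair_def mult div using assms(3,4) by (simp add: field_simps power2_eq_square)
qed

lemma theta_pair_inverse:
  assumes "norm p < 1" "x \<noteq> 0" "s \<noteq> 0"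
  shows "theta_pair p s (1 / x) = theta_pair p s x / x ^ 2"
proof -
  have mult: "theta (1 / x * s) p = - theta (x / s) p / (x / s)"
    using theta_inverse[OF assms(1), of "x / s"] assms by simp
  have div: "theta (1 / x / s) p = - theta (x * s) p / (x * s)"
    using theta_inverse[OF assms(1), of "x * s"] assms by simp
  show ?thesis
    unfolding theta_pair_def mult div using assms(2,3) by (simp add: field_simps power2_eq_square)
qed

lemma weierstrass_defect_quasi_periodic:
  assumes "norm p < 1" "p \<noteq> 0" "x \<noteq> 0" "y \<noteq> 0" "u \<noteq> 0" "v \<noteq> 0"
  shows "weierstrass_defect p y u v (p * x) = weierstrass_defect p y u v x / x ^ 2"
  using assms by (simp add: weierstrass_defect_def theta_pair_quasi_periodic diff_divide_distrib)

lemma weierstrass_defect_inverse: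
  assumes "norm p < 1" "x \<noteq> 0" "y \<noteq> 0" "u \<noteq> 0" "v \<noteq> 0"
  shows "weierstrass_defect p y u v (1 / x) = weierstrass_defect p y u v x / x ^ 2"
  using assms by (simp add: weierstrass_defect_def theta_pair_inverse diff_divide_distrib)

lemma weierstrass_defect_at_u:
  assumes "norm p < 1"
  shows "weierstrass_defect p y u v u = 0"
  using theta_one[OF assms] by (simp add: weierstrass_defect_def theta_pair_def)

lemma weierstrass_defect_at_v:
  assumes "norm p < 1" "y \<noteq> 0" "u \<noteq> 0" "v \<noteq> 0"
  shows "weierstrass_defect p y u v v = 0"
proof -
  have vy: "theta (v / y) p = - theta (y / v) p / (y / v)"
    using theta_inverse[OF assms(1), of "y / v"] assms by simp
  have uv: "theta (u / v) p = - theta (v / u) p / (v / u)"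
    using theta_inverse[OF assms(1), of "v / u"] assms by simp
  show ?thesis
    using assms theta_one[OF assms(1)]
    by (simp add: weierstrass_defect_def theta_pair_def vy uv field_simps)
qed

lemma weierstrass_defect_eq_0_at_zero_of_theta_pair:
  assumes p: "norm p < 1" "p \<noteq> 0" and nz: "y \<noteq> 0" "u \<noteq> 0" "v \<noteq> 0" "x \<noteq> 0"
    and zero: "theta_pair p u x = 0"
  shows "weierstrass_defect p y u v x = 0"
proof -
  have orbit: "weierstrass_defect p y u v (p powi m * z) = 0"
    if "z \<noteq> 0" "weierstrass_defect p y u v z = 0" for m z
    using mult_powi_invariant[of p z "\<lambda>w. weierstrass_defect p y u v w = 0" m]
      weierstrass_defect_quasi_periodic[OF p _ nz(1-3)] p that by auto
  have "theta (x * u) p = 0 \<or> theta (x / u) p = 0"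
    using zero by (simp add: theta_pair_def)
  then consider m where "x * u = p powi m" | m where "x / u = p powi m"
    using theta_eq_0_iff[OF p] nz by force
  then show ?thesis
  proof cases
    case 1
    then have x: "x = p powi m * (1 / u)"
      using nz by (simp add: field_simps)
    have "weierstrass_defect p y u v (1 / u) = 0"
      using weierstrass_defect_inverse[OF p(1) nz(2,1-3)] weierstrass_defect_at_u[OF p(1)] by simp
    then have "weierstrass_defect p y u v (p powi m * (1 / u)) = 0"
      by (rule orbit[rotated]) (use nz in simp)
    then show ?thesis
      using x by (simp only:)
  next
    case 2
    then have "x = p powi m * u"
      using nz by (simp add: field_simps)
    then show ?thesis
      using orbit[OF nz(2) weierstrass_defect_at_u[OF p(1)]] by simp
  qed
qed

lemma theta_pair_holomorphic:
  assumes "norm p < 1" "s \<noteq> 0"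
  shows "theta_pair p s holomorphic_on - {0}"
  unfolding theta_pair_def[abs_def] using assms
  by (intro holomorphic_intros theta_compose_holomorphic) (auto intro!: holomorphic_intros)

lemma weierstrass_defect_holomorphic:
  assumes "norm p < 1" "y \<noteq> 0" "u \<noteq> 0" "v \<noteq> 0"
  shows "weierstrass_defect p y u v holomorphic_on - {0}"
  unfolding weierstrass_defect_def[abs_def]
  using theta_pair_holomorphic[OF assms(1)] assms(2-4) by (intro holomorphic_intros) auto

lemma theta_pair_has_field_derivative:
  assumes "norm p < 1" "u \<noteq> 0" "x \<noteq> 0"
  shows "(theta_pair p u has_field_derivative
           deriv (\<lambda>z. theta z p) (x * u) * u * theta (x / u) p
           + deriv (\<lambda>z. theta z p) (x / u) * (1 / u) * theta (x * u) p) (at x)"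
proof -
  have "x * u \<noteq> 0" "x / u \<noteq> 0"
    using assms by auto
  note theta' = this[THEN theta_has_field_derivative[OF assms(1)]]
  have mult: "((\<lambda>x. theta (x * u) p) has_field_derivative deriv (\<lambda>z. theta z p) (x * u) * u) (at x)"
    by (rule DERIV_chain2[where g = "\<lambda>x. x * u", OF theta'(1)]) (auto intro!: derivative_eq_intros)
  have div:
    "((\<lambda>x. theta (x / u) p) has_field_derivative deriv (\<lambda>z. theta z p) (x / u) * (1 / u)) (at x)"
    by (rule DERIV_chain2[where g = "\<lambda>x. x / u", OF theta'(2)])
       (use assms(2) in \<open>auto intro!: derivative_eq_intros\<close>)
  have "theta_pair p u = (\<lambda>x. theta (x * u) p * theta (x / u) p)"
    by (simp add: theta_pair_def[abs_def])
  then show ?thesis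
    using DERIV_mult[OF mult div] by simp
qed

lemma deriv_theta_pair_nonzero:
  assumes p: "norm p < 1" "p \<noteq> 0" and nz: "u \<noteq> 0" "x \<noteq> 0"
    and zero: "theta_pair p u x = 0" and u: "theta (u * u) p \<noteq> 0"
  shows "deriv (theta_pair p u) x \<noteq> 0"
proof -
  have xu: "x * u \<noteq> 0" "x / u \<noteq> 0"
    using nz by auto
  have simple: "\<not> (theta (x * u) p = 0 \<and> theta (x / u) p = 0)"
  proof
    assume "theta (x * u) p = 0 \<and> theta (x / u) p = 0"
    then obtain m k where "x * u = p powi m" "x / u = p powi k"
      using theta_eq_0_iff[OF p] xu by metis
    then have "u * u = p powi (m - k)"
      using nz p(2) by (simp add: power_int_diff field_simps)
    moreover have "u * u \<noteq> 0"
      using nz by simp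
    ultimately show False
      using u theta_eq_0_iff[OF p] by blast
  qed
  have "theta (x * u) p = 0 \<or> theta (x / u) p = 0"
    using zero by (simp add: theta_pair_def)
  then show ?thesis
    using simple deriv_theta_nonzero[OF p] xu nz
    by (auto simp: DERIV_imp_deriv[OF theta_pair_has_field_derivative[OF p(1) nz]])
qed

definition weierstrass_quotient ::
    "complex \<Rightarrow> complex \<Rightarrow> complex \<Rightarrow> complex \<Rightarrow> complex \<Rightarrow> complex" where
  "weierstrass_quotient p y u v x =
     (if theta_pair p u x = 0 then deriv (weierstrass_defect p y u v) x / deriv (theta_pair p u) x
      else weierstrass_defect p y u v x / theta_pair p u x)"

lemma weierstrass_quotient_holomorphic:
  assumes p: "norm p < 1" "p \<noteq> 0" and nz: "y \<noteq> 0" "u \<noteq> 0" "v \<noteq> 0"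
    and u: "theta (u * u) p \<noteq> 0"
  shows "weierstrass_quotient p y u v holomorphic_on - {0}"
  unfolding weierstrass_quotient_def[abs_def]
proof (rule holomorphic_on_quotient_simple_zeros)
  show "weierstrass_defect p y u v holomorphic_on - {0}"
    by (rule weierstrass_defect_holomorphic[OF p(1) nz])
  show "theta_pair p u holomorphic_on - {0}"
    by (rule theta_pair_holomorphic[OF p(1) nz(2)])
  fix x
  assume "x \<in> - {0}" "theta_pair p u x = 0"
  then show "weierstrass_defect p y u v x = 0 \<and> deriv (theta_pair p u) x \<noteq> 0"
    using weierstrass_defect_eq_0_at_zero_of_theta_pair[OF p nz]
      deriv_theta_pair_nonzero[OF p nz(2) _ _ u] by auto
qed auto

lemma weierstrass_quotient_dilation_invariant:
  assumes p: "norm p < 1" "p \<noteq> 0" and nz: "y \<noteq> 0" "u \<noteq> 0" "v \<noteq> 0" "z \<noteq> 0"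
    and u: "theta (u * u) p \<noteq> 0" and uv: "theta_pair p u v \<noteq> 0"
  shows "weierstrass_quotient p y u v (p * z) = weierstrass_quotient p y u v z"
proof (rule analytic_continuation_open[where f = "\<lambda>z. weierstrass_quotient p y u v (p * z)"
      and s = "theta_pair p u -` (- {0}) \<inter> - {0}" and s' = "- {0}"])
  note H = weierstrass_quotient_holomorphic[OF p nz(1-3) u]
  show "open (theta_pair p u -` (- {0}) \<inter> - {0})"
    using continuous_on_open_vimage[of "- {0}" "theta_pair p u"]
      holomorphic_on_imp_continuous_on[OF theta_pair_holomorphic[OF p(1) nz(2)]] by auto
  show "theta_pair p u -` (- {0}) \<inter> - {0} \<noteq> {}"
    using uv nz(3) by auto
  have "(\<lambda>z. p * z) holomorphic_on - {0}" "(\<lambda>z. p * z) ` (- {0}) \<subseteq> - {0}"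
    using p(2) by (auto intro!: holomorphic_intros)
  from holomorphic_on_compose_gen[OF this(1) H this(2)]
  show "(\<lambda>z. weierstrass_quotient p y u v (p * z)) holomorphic_on - {0}"
    by (simp add: o_def)
  fix w
  assume "w \<in> theta_pair p u -` (- {0}) \<inter> - {0}"
  then have "theta_pair p u w \<noteq> 0" "w \<noteq> 0"
    by auto
  then show "weierstrass_quotient p y u v (p * w) = weierstrass_quotient p y u v w"
    using theta_pair_quasi_periodic[OF p _ nz(2)] weierstrass_defect_quasi_periodic[OF p _ nz(1-3)]
    by (simp add: weierstrass_quotient_def)
qed (use weierstrass_quotient_holomorphic[OF p nz(1-3) u] nz(4) in
      \<open>auto simp: connected_punctured_universe\<close>)

lemma weierstrass_defect_eq_0_generic:
  assumes p: "norm p < 1" "p \<noteq> 0" and nz: "y \<noteq> 0" "u \<noteq> 0" "v \<noteq> 0" "x \<noteq> 0"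
    and u: "theta (u * u) p \<noteq> 0" and uv: "theta_pair p u v \<noteq> 0"
  shows "weierstrass_defect p y u v x = 0"
proof -
  obtain c where c: "\<And>z. z \<noteq> 0 \<Longrightarrow> weierstrass_quotient p y u v z = c"
    using dilation_invariant_holomorphic_constant[OF p weierstrass_quotient_holomorphic[OF p nz(1-3) u]]
      weierstrass_quotient_dilation_invariant[OF p nz(1-3) _ u uv] by blast
  have "c = 0"
    using c[OF nz(3)] weierstrass_defect_at_v[OF p(1) nz(1-3)] uv by (simp add: weierstrass_quotient_def)
  then show ?thesis
    using c[OF nz(4)] weierstrass_defect_eq_0_at_zero_of_theta_pair[OF p nz]
    by (auto simp: weierstrass_quotient_def split: if_splits)
qed

lemma countable_degenerate_parameters:
  assumes p: "norm p < 1" "p \<noteq> 0" and v: "v \<noteq> 0"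
  shows "countable {u. u \<noteq> 0 \<and> (theta (u * u) p = 0 \<or> theta_pair p u v = 0)}"
proof (rule countable_subset)
  show "countable (\<Union>m. {w. w * w = p powi m} \<union> {p powi m / v, v / p powi m})"
    by (intro countable_UN countable_Un) (auto intro: countable_finite finite_square_roots)
  show "{u. u \<noteq> 0 \<and> (theta (u * u) p = 0 \<or> theta_pair p u v = 0)}
          \<subseteq> (\<Union>m. {w. w * w = p powi m} \<union> {p powi m / v, v / p powi m})"
  proof clarify
    fix u
    assume u: "u \<noteq> 0" and "theta (u * u) p = 0 \<or> theta_pair p u v = 0"
    then consider "theta (u * u) p = 0" | "theta (v * u) p = 0" | "theta (v / u) p = 0"
      by (auto simp: theta_pair_def)
    then show "u \<in> (\<Union>m. {w. w * w = p powi m} \<union> {p powi m / v, v / p powi m})"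
    proof cases
      case 1
      then show ?thesis
        using theta_eq_0_iff[OF p, of "u * u"] u by auto
    next
      case 2
      then obtain m where "v * u = p powi m"
        using theta_eq_0_iff[OF p, of "v * u"] u v by auto
      then have "u = p powi m / v"
        using v by (simp add: field_simps)
      then show ?thesis
        by blast
    next
      case 3
      then obtain m where "v / u = p powi m"
        using theta_eq_0_iff[OF p, of "v / u"] u v by auto
      then have "u = v / p powi m"
        using u v p(2) by (auto simp: field_simps)
      then show ?thesis
        by blast
    qed
  qed
qed

lemma weierstrass_defect_eq_0:
  assumes p: "norm p < 1" "p \<noteq> 0" and nz: "x \<noteq> 0" "y \<noteq> 0" "u \<noteq> 0" "v \<noteq> 0"
  shows "weierstrass_defect p y u v x = 0"
proof -
  have "(\<lambda>u. weierstrass_defect p y u v x) holomorphic_on - {0}"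
    unfolding weierstrass_defect_def theta_pair_def
    using nz by (intro holomorphic_intros theta_compose_holomorphic[OF p(1)]) auto
  from continuous_on_eq_0_off_countable[OF _ holomorphic_on_imp_continuous_on[OF this]
      countable_degenerate_parameters[OF p nz(4)]]
  show ?thesis
    using weierstrass_defect_eq_0_generic[OF p nz(2) _ nz(4,1)] nz(3) by auto
qed

theorem theta_addition_formula:
  assumes p: "norm p < 1" and nz: "a \<noteq> 0" "b \<noteq> 0" "c \<noteq> 0" "d \<noteq> 0"
  shows "theta (a / b) p * theta (a / c) p * theta (a / d) p * theta (b * c * d / a) p
       - theta b p * theta c p * theta d p * theta (a ^ 2 / (b * c * d)) p
       = - (b * c * d / a) *
           (theta a p * theta (a / (b * c)) p * theta (a / (b * d)) p * theta (a / (c * d)) p)"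
proof (cases "p = 0")
  case True
  show ?thesis
    unfolding True theta_zero_base using nz by (simp add: field_simps power2_eq_square)
next
  case False
  define s where "s = csqrt (c * d)"
  have ss: "s * s = c * d"
    unfolding s_def using power2_csqrt[of "c * d"] by (simp add: power2_eq_square)
  then have s: "s \<noteq> 0"
    using nz by auto
  have defect: "weierstrass_defect p (a / (b * s)) s (c / s) (a / s) = 0"
    by (rule weierstrass_defect_eq_0[OF p False]) (use nz s in auto)
  have arguments:
    "a / s * (a / (b * s)) = a ^ 2 / (b * c * d)" "a / s / (a / (b * s)) = b"
    "s * (c / s) = c" "s / (c / s) = d" "a / s * (c / s) = a / d" "a / s / (c / s) = a / c"
    "s * (a / (b * s)) = a / b" "s / (a / (b * s)) = b * c * d / a"
    "a / (b * s) * (c / s) = a / (b * d)" "a / (b * s) / (c / s) = a / (b * c)"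
    "a / s * s = a" "a / s / s = a / (c * d)"
    using nz s ss by (simp_all add: field_simps power2_eq_square)
  show ?thesis
    using defect[unfolded weierstrass_defect_def theta_pair_def arguments] by (simp add: algebra_simps)
qed

lemma theta_list_quotient_complement:
  assumes p: "norm p < 1" and nz: "a \<noteq> 0" "b \<noteq> 0" "c \<noteq> 0" "d \<noteq> 0"
    and D1: "theta_list [a / (b * c * d), a / d, a / c, a / b] p \<noteq> 0"
    and D2: "theta_list [a / b, a / c, a / d, b * c * d / a] p \<noteq> 0"
  shows "theta_list [a, a / (b * c), a / (b * d), a / (c * d)] p /
           theta_list [a / (b * c * d), a / d, a / c, a / b] p
       = 1 - theta_list [b, c, d, a ^ 2 / (b * c * d)] p /
               theta_list [a / b, a / c, a / d, b * c * d / a] p"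
proof -
  define k where "k = b * c * d / a"
  define N1 where "N1 = theta_list [a, a / (b * c), a / (b * d), a / (c * d)] p"
  define D1' where "D1' = theta_list [a / (b * c * d), a / d, a / c, a / b] p"
  define N2 where "N2 = theta_list [b, c, d, a ^ 2 / (b * c * d)] p"
  define D2' where "D2' = theta_list [a / b, a / c, a / d, b * c * d / a] p"
  have "theta (b * c * d / a) p = - theta (a / (b * c * d)) p * k"
    using theta_inverse[OF p, of "a / (b * c * d)"] nz by (simp add: k_def)
  then have D2_eq: "D2' = - k * D1'"
    by (simp add: D1'_def D2'_def theta_list_def algebra_simps)
  have addition: "D2' - N2 = - k * N1"
    using theta_addition_formula[OF p nz]
    by (simp add: N1_def N2_def D2'_def k_def theta_list_def algebra_simps)
  have "k \<noteq> 0" "D2' \<noteq> 0"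
    using nz D2 by (simp_all add: k_def D2'_def)
  then have "1 - N2 / D2' = (D2' - N2) / D2'"
    by (simp add: field_simps)
  also have "\<dots> = (- k * N1) / D2'"
    by (simp only: addition)
  also have "\<dots> = (- k * N1) / (- k * D1')"
    by (simp only: D2_eq)
  also have "\<dots> = N1 / D1'"
    using \<open>k \<noteq> 0\<close> by simp
  finally show ?thesis
    by (simp add: N1_def D1'_def N2_def D2'_def)
qed

lemma lam_eq_diff_partial_products:
  assumes "norm p < 1" "a k \<noteq> 0" "b k \<noteq> 0" "c k \<noteq> 0" "d k \<noteq> 0"
    and "theta_list [a k / (b k * c k * d k), a k / d k, a k / c k, a k / b k] p \<noteq> 0"
    and "theta_list [a k / b k, a k / c k, a k / d k, b k * c k * d k / a k] p \<noteq> 0"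
  shows "lam a b c d p k = (\<Prod>j<k. wfac a b c d p j) - (\<Prod>j<Suc k. wfac a b c d p j)"
proof -
  have quotient: "theta_list [a k, a k / (b k * c k), a k / (b k * d k), a k / (c k * d k)] p /
          theta_list [a k / (b k * c k * d k), a k / d k, a k / c k, a k / b k] p
        = 1 - wfac a b c d p k"
    unfolding wfac_def by (rule theta_list_quotient_complement[OF assms])
  then show ?thesis
    unfolding lam_def quotient by (simp add: algebra_simps)
qed

theorem mainTheorem11:
  fixes p P :: complex and a b c d A B C D :: "nat \<Rightarrow> complex" and n :: nat
  assumes "norm p < 1" and "norm P < 1"
    and "\<And>k. a k \<noteq> 0" and "\<And>k. b k \<noteq> 0" and "\<And>k. c k \<noteq> 0" and "\<And>k. d k \<noteq> 0"
    and "\<And>k. A k \<noteq> 0" and "\<And>k. B k \<noteq> 0" and "\<And>k. C k \<noteq> 0" and "\<And>k. D k \<noteq> 0"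
    and "\<And>k. theta_list [a k / (b k * c k * d k), a k / d k, a k / c k, a k / b k] p \<noteq> 0"
    and "\<And>k. theta_list [a k / b k, a k / c k, a k / d k, b k * c k * d k / a k] p \<noteq> 0"
    and "\<And>k. theta_list [A k / (B k * C k * D k), A k / D k, A k / C k, A k / B k] P \<noteq> 0"
    and "\<And>k. theta_list [A k / B k, A k / C k, A k / D k, B k * C k * D k / A k] P \<noteq> 0"
  shows "(\<Sum>k=0..n. lam a b c d p k * (1 - (\<Prod>j=0..n-k. wfac A B C D P j)))
       = (\<Sum>k=0..n. lam A B C D P k * (1 - (\<Prod>j=0..n-k. wfac a b c d p j)))"
proof -
  have "lam a b c d p k = (\<Prod>j<k. wfac a b c d p j) - (\<Prod>j<Suc k. wfac a b c d p j)"
    and "lam A B C D P k = (\<Prod>j<k. wfac A B C D P j) - (\<Prod>j<Suc k. wfac A B C D P j)" for k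
    by (rule lam_eq_diff_partial_products; use assms in simp)+
  then show ?thesis
    by (simp only: sum_diff_partial_products_symmetric)
qed

end
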